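(* For every $h\in\widehat{\operatorname{PC}^{\bowtie}}$ and every partition $\mathcal P$ associated with $h$, one has $\varepsilon(h)=\varepsilon(h,\mathcal P)$.
   Context: $X=[0,1[$; $\widehat{\operatorname{PC}^{\bowtie}}$ is the group of bijections $X\to X$ continuous outside a finite subset, containing the group ${\mathfrak S}_{\mathrm{fin}}$ of finitely supported permutations with classical signature $\operatorname{sgn}$ valued in $\mathbb{Z}/2\mathbb{Z}$. For $h\in\widehat{\operatorname{PC}^{\bowtie}}$, a partition associated with $h$ is a finite partition $\mathcal P=\{I_1,\dots,I_n\}$ of $X$ into intervals $I_j=[\alpha_j,b_j[$ such that $h$ is continuous on $I_j^\circ=]\alpha_j,b_j[$ for each $j$ (so $h$ is strictly monotone there and $h(I_j^\circ)$ is an open interval). Let $\beta_j$ be the left endpoint of $h(I_j^\circ)$; $\{h(\alpha_j)\}=\{\beta_j\}$, and $\sigma_{(h,\mathcal P)}\in{\mathfrak S}_{\mathrm{fin}}$ sends $h(\alpha_j)$ to $\beta_j$ for each $j$ and fixes all other points. $R(h,\mathcal P)$ is the number of $j$ with $h$ decreasing on $I_j^\circ$, and $\varepsilon(h,\mathcal P)=R(h,\mathcal P)+\operatorname{sgn}(\sigma_{(h,\mathcal P)})\bmod 2$. There is a unique associated partition $\mathcal P^{\min}_h$ with the fewest intervals, every associated partition refines it, and $\varepsilon(h):=\varepsilon(h,\mathcal P^{\min}_h)$. *)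

theory Defs
  imports "HOL-Analysis.Analysis" "HOL-Combinatorics.Permutations"
begin

definition Xs :: "real set" where
  "Xs = {0..<1}"

definition PC_hat :: "(real \<Rightarrow> real) \<Rightarrow> bool" where
  "PC_hat h \<longleftrightarrow> bij_betw h Xs Xs \<and>
     (\<exists>F. finite F \<and> (\<forall>x \<in> Xs - F. continuous (at x within Xs) h))"

definition assoc_partition :: "(real \<Rightarrow> real) \<Rightarrow> real set set \<Rightarrow> bool" where
  "assoc_partition h P \<longleftrightarrow> finite P \<and> \<Union>P = Xs \<and>
     (\<forall>I\<in>P. \<forall>J\<in>P. I \<noteq> J \<longrightarrow> I \<inter> J = {}) \<and>
     (\<forall>I\<in>P. \<exists>a b. a < b \<and> I = {a..<b} \<and> continuous_on {a<..<b} h)"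

definition lend :: "real set \<Rightarrow> real" where "lend I = Inf I"
definition interior_iv :: "real set \<Rightarrow> real set" where
  "interior_iv I = {Inf I<..<Sup I}"

definition beta_pt :: "(real \<Rightarrow> real) \<Rightarrow> real set \<Rightarrow> real" where
  "beta_pt h I = Inf (h ` interior_iv I)"

definition sigma_hP :: "(real \<Rightarrow> real) \<Rightarrow> real set set \<Rightarrow> real \<Rightarrow> real" where
  "sigma_hP h P x = (if \<exists>I\<in>P. x = h (lend I)
      then beta_pt h (SOME I. I \<in> P \<and> x = h (lend I)) else x)"

definition R_hP :: "(real \<Rightarrow> real) \<Rightarrow> real set set \<Rightarrow> nat" where
  "R_hP h P = card {I\<in>P. \<forall>x\<in>interior_iv I. \<forall>y\<in>interior_iv I. x < y \<longrightarrow> h y < h x}"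

definition sgn2 :: "(real \<Rightarrow> real) \<Rightarrow> nat" where
  "sgn2 s = (if evenperm s then 0 else 1)"

definition eps_hP :: "(real \<Rightarrow> real) \<Rightarrow> real set set \<Rightarrow> nat" where
  "eps_hP h P = (R_hP h P + sgn2 (sigma_hP h P)) mod 2"

definition Pmin :: "(real \<Rightarrow> real) \<Rightarrow> real set set" where
  "Pmin h = (THE P. assoc_partition h P \<and> (\<forall>Q. assoc_partition h Q \<longrightarrow> card P \<le> card Q))"

definition eps_h :: "(real \<Rightarrow> real) \<Rightarrow> nat" where
  "eps_h h = eps_hP h (Pmin h)"

end

theory Submission
  imports Defs
begin

text \<open>A partition associated with h is determined by the finite set L of left endpoints of its
intervals, and every such L contains L0 = {0} \<union> {discontinuities of h}; the partition given by
L0 is therefore P_min. So it suffices to show that \<open>\<epsilon>(h, -)\<close> does not change when a cut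
c \<notin> L0 is removed, merging [a,c[ and [c,b[ into [a,b[. Being continuous and injective on ]a,b[,
h is strictly monotone there. If it increases, neither R nor \<sigma> changes: the infimum of h on
]a,c[ is that on ]a,b[, and that on ]c,b[ is h(c). If it decreases, R drops by one and \<sigma> is
composed with the transposition of h(a) and h(c), because now the infimum on ]a,c[ is h(c) while
the infimum on ]c,b[ is that on ]a,b[; both summands of \<epsilon> flip parity.\<close>

section \<open>Infima and monotonicity on real intervals\<close>

lemma Inf_image_eq_limit:
  fixes f :: "'a \<Rightarrow> 'b::{conditionally_complete_linorder, linorder_topology}"
  assumes lim: "(f \<longlongrightarrow> l) F" and F: "F \<noteq> bot" and S: "eventually (\<lambda>x. x \<in> S) F"
    and lower: "\<And>x. x \<in> S \<Longrightarrow> l \<le> f x"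
  shows "Inf (f ` S) = l"
proof (rule antisym)
  have "S \<noteq> {}" using eventually_happens'[OF F S] by blast
  then show "l \<le> Inf (f ` S)" using lower by (auto intro: cInf_greatest)
  have bdd: "bdd_below (f ` S)" using lower by (rule bdd_belowI2)
  from S have "eventually (\<lambda>x. Inf (f ` S) \<le> f x) F"
    by (rule eventually_mono) (use bdd in \<open>auto intro: cInf_lower\<close>)
  then show "Inf (f ` S) \<le> l" using tendsto_lowerbound[OF lim _ F] by blast
qed

lemma Inf_image_initial_segment:
  fixes h :: "real \<Rightarrow> real"
  assumes mono: "mono_on {a<..<b} h" and c: "a < c" "c \<le> b" and bdd: "bdd_below (h ` {a<..<b})"
  shows "Inf (h ` {a<..<c}) = Inf (h ` {a<..<b})"
proof (rule antisym)
  show "Inf (h ` {a<..<b}) \<le> Inf (h ` {a<..<c})"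
    using c bdd by (intro cInf_superset_mono) auto
  have bdd': "bdd_below (h ` {a<..<c})" by (rule bdd_below_mono[OF bdd]) (use c in auto)
  show "Inf (h ` {a<..<c}) \<le> Inf (h ` {a<..<b})"
  proof (rule cInf_greatest)
    fix y assume "y \<in> h ` {a<..<b}"
    then obtain x where x: "x \<in> {a<..<b}" "y = h x" by blast
    show "Inf (h ` {a<..<c}) \<le> y"
    proof (cases "x < c")
      case True then show ?thesis using x bdd' by (auto intro: cInf_lower)
    next
      case False
      then have "h ((a + c) / 2) \<le> h x" using c x by (intro monotone_onD[OF mono]) auto
      moreover have "Inf (h ` {a<..<c}) \<le> h ((a + c) / 2)" using c bdd' by (intro cInf_lower) auto
      ultimately show ?thesis using x by simp
    qed
  qed (use c in auto)
qed

lemma Inf_image_final_segment: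
  fixes h :: "real \<Rightarrow> real"
  assumes anti: "antimono_on {a<..<b} h" and c: "a \<le> c" "c < b" and bdd: "bdd_below (h ` {a<..<b})"
  shows "Inf (h ` {c<..<b}) = Inf (h ` {a<..<b})"
proof (rule antisym)
  show "Inf (h ` {a<..<b}) \<le> Inf (h ` {c<..<b})"
    using c bdd by (intro cInf_superset_mono) auto
  have bdd': "bdd_below (h ` {c<..<b})" by (rule bdd_below_mono[OF bdd]) (use c in auto)
  show "Inf (h ` {c<..<b}) \<le> Inf (h ` {a<..<b})"
  proof (rule cInf_greatest)
    fix y assume "y \<in> h ` {a<..<b}"
    then obtain x where x: "x \<in> {a<..<b}" "y = h x" by blast
    show "Inf (h ` {c<..<b}) \<le> y"
    proof (cases "c < x")
      case True then show ?thesis using x bdd' by (auto intro: cInf_lower)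
    next
      case False
      then have "h ((c + b) / 2) \<le> h x" using c x by (intro monotone_onD[OF anti]) auto
      moreover have "Inf (h ` {c<..<b}) \<le> h ((c + b) / 2)" using c bdd' by (intro cInf_lower) auto
      ultimately show ?thesis using x by simp
    qed
  qed (use c in auto)
qed

lemma strict_mono_on_not_antimono:
  fixes h :: "real \<Rightarrow> real"
  assumes mono: "strict_mono_on {p<..<q} h" and pq: "p < q"
  shows "\<not> strict_antimono_on {p<..<q} h"
proof
  assume anti: "strict_antimono_on {p<..<q} h"
  define x y where "x = (2 * p + q) / 3" and "y = (p + 2 * q) / 3"
  have xy: "x \<in> {p<..<q}" "y \<in> {p<..<q}" "x < y" using pq by (auto simp: x_def y_def)
  have "h x < h y" by (rule monotone_onD[OF mono xy])
  moreover have "h y < h x" by (rule monotone_onD[OF anti xy])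
  ultimately show False by simp
qed

lemma Inf_notin_open_real:
  fixes U :: "real set"
  assumes "open U" "bdd_below U"
  shows "Inf U \<notin> U"
proof -
  obtain m where "\<And>u. u \<in> U \<Longrightarrow> m \<le> u" using assms(2) by (auto simp: bdd_below_def)
  then have "\<forall>u\<in>U. m - 1 < u" by force
  then show ?thesis using Inf_notin_open[OF assms(1)] by blast
qed

lemma eventually_at_right_Inf:
  fixes U :: "real set"
  assumes U: "open U" "is_interval U" "bdd_below U" and u: "u \<in> U"
  shows "eventually (\<lambda>t. t \<in> U) (at_right (Inf U))"
proof -
  have "Inf U < u"
    using cInf_lower[OF u U(3)] Inf_notin_open_real[OF U(1,3)] u by (metis order_le_less)
  moreover have "{Inf U<..<u} \<subseteq> U"
  proof
    fix t assume t: "t \<in> {Inf U<..<u}"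
    then obtain v where "v \<in> U" "v < t" using cInf_less_iff[of U t] u U(3) by auto
    then show "t \<in> U" using U(2) u t unfolding is_interval_1 by (meson greaterThanLessThan_iff less_imp_le)
  qed
  ultimately show ?thesis using eventually_at_right_real by (blast intro: eventually_mono)
qed

lemma continuous_on_greaterThanLessThan_join:
  fixes h :: "real \<Rightarrow> real"
  assumes "continuous_on {a<..<c} h" "continuous_on {c<..<b} h" "isCont h c"
  shows "continuous_on {a<..<b} h"
proof (rule continuous_at_imp_continuous_on, rule ballI)
  fix y assume y: "y \<in> {a<..<b}"
  consider "y < c" | "y = c" | "c < y" by linarith
  then show "isCont h y"
    by cases (use assms y continuous_on_eq_continuous_at[of "{a<..<c}" h]
        continuous_on_eq_continuous_at[of "{c<..<b}" h] in auto)
qed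

section \<open>Cut sets\<close>

definition next_cut :: "real set \<Rightarrow> real \<Rightarrow> real" where
  "next_cut L a = Min (insert 1 {x\<in>L. a < x})"

definition cut_set :: "real set \<Rightarrow> bool" where
  "cut_set L \<longleftrightarrow> finite L \<and> 0 \<in> L \<and> L \<subseteq> Xs"

definition cut_partition :: "real set \<Rightarrow> real set set" where
  "cut_partition L = (\<lambda>a. {a..<next_cut L a}) ` L"

definition admissible_cuts :: "(real \<Rightarrow> real) \<Rightarrow> real set \<Rightarrow> bool" where
  "admissible_cuts h L \<longleftrightarrow> cut_set L \<and> (\<forall>a\<in>L. continuous_on {a<..<next_cut L a} h)"

lemma admissible_cuts_imp_cut_set: "admissible_cuts h L \<Longrightarrow> cut_set L"
  by (simp add: admissible_cuts_def)

lemma next_cut_le_1: "finite L \<Longrightarrow> next_cut L a \<le> 1"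
  unfolding next_cut_def by (rule Min_le) auto

lemma next_cut_le: "finite L \<Longrightarrow> x \<in> L \<Longrightarrow> a < x \<Longrightarrow> next_cut L a \<le> x"
  unfolding next_cut_def by (rule Min_le) auto

lemma next_cut_mem: "finite L \<Longrightarrow> next_cut L a \<in> insert 1 {x\<in>L. a < x}"
  unfolding next_cut_def by (rule Min_in) auto

lemma next_cut_eqI:
  assumes "finite L" "a < n" "n = 1 \<or> n \<in> L" "n \<le> 1" "\<And>x. x \<in> L \<Longrightarrow> a < x \<Longrightarrow> n \<le> x"
  shows "next_cut L a = n"
  unfolding next_cut_def by (rule Min_eqI) (use assms in auto)

lemma cut_set_bounds: "cut_set L \<Longrightarrow> a \<in> L \<Longrightarrow> 0 \<le> a \<and> a < 1"
  unfolding cut_set_def Xs_def by auto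

lemma next_cut_gt: "cut_set L \<Longrightarrow> a \<in> L \<Longrightarrow> a < next_cut L a"
  using next_cut_mem[of L a] cut_set_bounds[of L a] by (auto simp: cut_set_def)

lemma cut_interval_subset_Xs: "cut_set L \<Longrightarrow> a \<in> L \<Longrightarrow> {a..<next_cut L a} \<subseteq> Xs"
  using cut_set_bounds[of L a] next_cut_le_1[of L a] by (auto simp: cut_set_def Xs_def)

lemma cut_intervals_disjoint:
  assumes L: "cut_set L" and a: "a \<in> L" "a' \<in> L" "a \<noteq> a'"
  shows "{a..<next_cut L a} \<inter> {a'..<next_cut L a'} = {}"
proof -
  have "next_cut L x \<le> y" if "x \<in> L" "y \<in> L" "x < y" for x y
    using L that by (auto simp: cut_set_def intro: next_cut_le)
  with a show ?thesis
    by (cases "a < a'") (fastforce simp: not_less_iff_gr_or_eq)+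
qed

lemma inj_on_next_cut: "cut_set L \<Longrightarrow> inj_on (next_cut L) L"
  by (rule inj_onI) (metis cut_intervals_disjoint next_cut_gt disjoint_iff atLeastLessThan_iff nle_le)

lemma cut_set_cover:
  assumes L: "cut_set L" and x: "x \<in> Xs"
  obtains a where "a \<in> L" "a \<le> x" "x < next_cut L a"
proof -
  let ?S = "{y\<in>L. y \<le> x}"
  have fin: "finite ?S" and "0 \<in> ?S" using L x by (auto simp: cut_set_def Xs_def)
  then have a: "Max ?S \<in> ?S" by (intro Max_in) auto
  have "x < next_cut L (Max ?S)"
  proof (rule ccontr)
    assume "\<not> x < next_cut L (Max ?S)"
    moreover have "next_cut L (Max ?S) \<in> insert 1 {y\<in>L. Max ?S < y}"
      using L next_cut_mem cut_set_def by blast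
    ultimately show False using x fin Max_ge[OF fin] by (fastforce simp: Xs_def)
  qed
  with a that show thesis by blast
qed

lemma cut_predecessor:
  assumes L: "cut_set L" and c: "c \<in> L" "c \<noteq> 0"
  obtains a where "a \<in> L" "next_cut L a = c"
proof -
  let ?S = "{x\<in>L. x < c}"
  have fin: "finite ?S" and "0 \<in> ?S" using L c cut_set_bounds[OF L c(1)] by (auto simp: cut_set_def)
  then have a: "Max ?S \<in> ?S" by (intro Max_in) auto
  have "next_cut L (Max ?S) = c"
  proof (rule next_cut_eqI)
    fix x assume "x \<in> L" "Max ?S < x"
    then show "c \<le> x" using Max_ge[OF fin, of x] by force
  qed (use L c a cut_set_bounds[OF L c(1)] in \<open>auto simp: cut_set_def\<close>)
  with a that show thesis by blast
qed

lemma next_cut_Diff: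
  assumes L: "cut_set L" and x: "x \<in> L" and ne: "next_cut L x \<noteq> c"
  shows "next_cut (L - {c}) x = next_cut L x"
  using L next_cut_gt[OF L x] next_cut_mem[of L x] ne next_cut_le_1[of L x] next_cut_le[of L _ x]
  by (intro next_cut_eqI) (auto simp: cut_set_def)

lemma next_cut_Diff_predecessor:
  assumes L: "cut_set L" and a: "a \<in> L" and c: "c \<in> L" "next_cut L a = c"
  shows "next_cut (L - {c}) a = next_cut L c"
proof (rule next_cut_eqI)
  have fin: "finite L" using L by (simp add: cut_set_def)
  show "finite (L - {c})" using fin by simp
  show "a < next_cut L c" using next_cut_gt[OF L a] next_cut_gt[OF L c(1)] c(2) by simp
  show "next_cut L c = 1 \<or> next_cut L c \<in> L - {c}"
    using next_cut_mem[OF fin, of c] by auto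
  show "next_cut L c \<le> 1" using next_cut_le_1[OF fin] .
  fix x assume "x \<in> L - {c}" "a < x"
  then show "next_cut L c \<le> x"
    using next_cut_le[OF fin, of x a] next_cut_le[OF fin, of x c] c(2) by force
qed

section \<open>Associated partitions are cut partitions\<close>

lemma lend_atLeastLessThan [simp]: "a < b \<Longrightarrow> lend {a..<b} = a"
  unfolding lend_def by simp

lemma interior_iv_atLeastLessThan [simp]: "a < b \<Longrightarrow> interior_iv {a..<b} = {a<..<b}"
  unfolding interior_iv_def by simp

lemma inj_on_cut_interval: "cut_set L \<Longrightarrow> inj_on (\<lambda>a. {a..<next_cut L a}) L"
  by (rule inj_onI) (metis lend_atLeastLessThan next_cut_gt)

lemma card_cut_partition: "cut_set L \<Longrightarrow> card (cut_partition L) = card L"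
  unfolding cut_partition_def by (rule card_image[OF inj_on_cut_interval])

lemma assoc_partition_cut_partition:
  assumes h: "admissible_cuts h L"
  shows "assoc_partition h (cut_partition L)"
proof -
  have L: "cut_set L" using h by (rule admissible_cuts_imp_cut_set)
  have "\<Union> (cut_partition L) = Xs"
  proof
    show "\<Union> (cut_partition L) \<subseteq> Xs"
      using cut_interval_subset_Xs[OF L] by (auto simp: cut_partition_def)
    show "Xs \<subseteq> \<Union> (cut_partition L)"
    proof
      fix x assume "x \<in> Xs"
      then obtain a where "a \<in> L" "x \<in> {a..<next_cut L a}" by (auto elim: cut_set_cover[OF L])
      then show "x \<in> \<Union> (cut_partition L)" by (auto simp: cut_partition_def)
    qed
  qed
  moreover have "I \<inter> J = {}" if IJ: "I \<in> cut_partition L" "J \<in> cut_partition L" "I \<noteq> J" for I J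
  proof -
    obtain a a' where "a \<in> L" "a' \<in> L" "I = {a..<next_cut L a}" "J = {a'..<next_cut L a'}"
      using IJ(1,2) by (auto simp: cut_partition_def)
    then show ?thesis using IJ(3) cut_intervals_disjoint[OF L] by blast
  qed
  moreover have "\<exists>a b. a < b \<and> I = {a..<b} \<and> continuous_on {a<..<b} h"
    if "I \<in> cut_partition L" for I
    using that h next_cut_gt[OF L] by (auto simp: cut_partition_def admissible_cuts_def)
  moreover have "finite (cut_partition L)" using L by (simp add: cut_partition_def cut_set_def)
  ultimately show ?thesis by (simp add: assoc_partition_def)
qed

context
  fixes h :: "real \<Rightarrow> real" and P :: "real set set"
  assumes P: "assoc_partition h P"
begin

lemma assoc_partition_intervalE:
  assumes "I \<in> P"
  obtains a b where "a < b" "I = {a..<b}" "continuous_on {a<..<b} h"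
proof -
  have "\<forall>I\<in>P. \<exists>a b. a < b \<and> I = {a..<b} \<and> continuous_on {a<..<b} h"
    using P by (simp add: assoc_partition_def)
  with assms that show thesis by blast
qed

lemma assoc_partition_unique:
  "I \<in> P \<Longrightarrow> J \<in> P \<Longrightarrow> x \<in> I \<Longrightarrow> x \<in> J \<Longrightarrow> I = J"
  using P unfolding assoc_partition_def disjoint_iff by metis

lemma assoc_partition_subset_Xs: "I \<in> P \<Longrightarrow> I \<subseteq> Xs"
  using P unfolding assoc_partition_def by (metis Union_upper)

lemma assoc_partition_right_end:
  assumes I: "I \<in> P" "I = {a..<b}" "a < b"
  shows "b \<le> 1" and "b < 1 \<Longrightarrow> b \<in> lend ` P"
proof -
  have IX: "I \<subseteq> Xs" using assoc_partition_subset_Xs[OF I(1)] .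
  show "b \<le> 1"
  proof (rule ccontr)
    assume "\<not> b \<le> 1"
    then have "max a 1 \<in> I" using I by auto
    then show False using IX by (auto simp: Xs_def)
  qed
  assume "b < 1"
  then have "b \<in> Xs" using IX I by (auto simp: Xs_def)
  then have "b \<in> \<Union>P" using P by (simp add: assoc_partition_def)
  then obtain J where J: "J \<in> P" "b \<in> J" by blast
  obtain a' b' where J': "a' < b'" "J = {a'..<b'}" by (rule assoc_partition_intervalE[OF J(1)])
  have "a' = b"
  proof (rule ccontr)
    assume "a' \<noteq> b"
    then have "max a a' \<in> I \<inter> J" using I J J' by auto
    then have "I = J" using assoc_partition_unique[OF I(1) J(1)] by blast
    then have "b \<in> {a..<b}" using I(2) J(2) by simp
    then show False by simp
  qed
  then show "b \<in> lend ` P" using J(1) J' by force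
qed

lemma next_cut_lend:
  assumes I: "I \<in> P" "I = {a..<b}" "a < b"
  shows "next_cut (lend ` P) a = b"
proof (rule next_cut_eqI)
  show "finite (lend ` P)" using P by (simp add: assoc_partition_def)
  show "b \<le> 1" using assoc_partition_right_end(1)[OF I] .
  then show "b = 1 \<or> b \<in> lend ` P" using assoc_partition_right_end(2)[OF I] by linarith
  fix x assume x: "x \<in> lend ` P" "a < x"
  then obtain J where J: "J \<in> P" "x = lend J" by blast
  obtain a' b' where J': "a' < b'" "J = {a'..<b'}" by (rule assoc_partition_intervalE[OF J(1)])
  show "b \<le> x"
  proof (rule ccontr)
    assume "\<not> b \<le> x"
    then have "I = J" using assoc_partition_unique[OF I(1) J(1), of x] I J J' x by simp
    then have "lend I = lend J" by simp
    then show False using I J J' x by simp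
  qed
qed (use I in simp)

lemma assoc_partition_eq_cut_partition:
  shows "admissible_cuts h (lend ` P)" and "cut_partition (lend ` P) = P"
proof -
  have interval: "I = {lend I..<next_cut (lend ` P) (lend I)}"
    and cont: "continuous_on {lend I<..<next_cut (lend ` P) (lend I)} h" if I: "I \<in> P" for I
  proof -
    obtain a b where "a < b" "I = {a..<b}" "continuous_on {a<..<b} h"
      by (rule assoc_partition_intervalE[OF I])
    with next_cut_lend[OF I] show "I = {lend I..<next_cut (lend ` P) (lend I)}"
      and "continuous_on {lend I<..<next_cut (lend ` P) (lend I)} h" by simp_all
  qed
  have "lend I \<in> Xs" if I: "I \<in> P" for I
  proof -
    obtain a b where "a < b" "I = {a..<b}" by (rule assoc_partition_intervalE[OF I])
    then show ?thesis using assoc_partition_subset_Xs[OF I] by auto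
  qed
  moreover have "0 \<in> lend ` P"
  proof -
    have "0 \<in> \<Union>P" using P by (simp add: assoc_partition_def Xs_def)
    then obtain I where I: "I \<in> P" "0 \<in> I" by blast
    obtain a b where "a < b" "I = {a..<b}" by (rule assoc_partition_intervalE[OF I(1)])
    then have "lend I = 0" using I assoc_partition_subset_Xs[OF I(1)] by (auto simp: Xs_def)
    then show ?thesis using I(1) by force
  qed
  ultimately have "cut_set (lend ` P)"
    using P by (auto simp: cut_set_def assoc_partition_def)
  then show "admissible_cuts h (lend ` P)" using cont unfolding admissible_cuts_def by blast
  have "cut_partition (lend ` P) = (\<lambda>I. {lend I..<next_cut (lend ` P) (lend I)}) ` P"
    by (simp add: cut_partition_def image_image)
  also have "\<dots> = P" using interval[symmetric] by simp
  finally show "cut_partition (lend ` P) = P" .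
qed

end

section \<open>R and \<sigma> of a cut partition\<close>

definition cut_beta :: "(real \<Rightarrow> real) \<Rightarrow> real set \<Rightarrow> real \<Rightarrow> real" where
  "cut_beta h L a = Inf (h ` {a<..<next_cut L a})"

definition decreasing_cuts :: "(real \<Rightarrow> real) \<Rightarrow> real set \<Rightarrow> real set" where
  "decreasing_cuts h L = {a\<in>L. strict_antimono_on {a<..<next_cut L a} h}"

lemma R_hP_cut_partition:
  assumes L: "cut_set L"
  shows "R_hP h (cut_partition L) = card (decreasing_cuts h L)"
proof -
  let ?I = "\<lambda>a. {a..<next_cut L a}"
  have "{I\<in>cut_partition L. strict_antimono_on (interior_iv I) h}
      = ?I ` {a\<in>L. strict_antimono_on {a<..<next_cut L a} h}"
    using next_cut_gt[OF L] by (auto simp: cut_partition_def)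
  moreover have "inj_on ?I {a\<in>L. strict_antimono_on {a<..<next_cut L a} h}"
    using inj_on_cut_interval[OF L] by (rule inj_on_subset) auto
  ultimately show ?thesis
    by (simp add: R_hP_def decreasing_cuts_def monotone_on_def card_image)
qed

lemma sigma_hP_cut_partition_cut:
  assumes L: "cut_set L" and inj: "inj_on h L" and a: "a \<in> L"
  shows "sigma_hP h (cut_partition L) (h a) = cut_beta h L a"
proof -
  have lt: "a < next_cut L a" using next_cut_gt[OF L a] .
  have I: "{a..<next_cut L a} \<in> cut_partition L" using a by (auto simp: cut_partition_def)
  have "(SOME I. I \<in> cut_partition L \<and> h a = h (lend I)) = {a..<next_cut L a}"
  proof (rule some_equality)
    show "{a..<next_cut L a} \<in> cut_partition L \<and> h a = h (lend {a..<next_cut L a})"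
      using I lt by simp
    fix J assume J: "J \<in> cut_partition L \<and> h a = h (lend J)"
    then obtain a' where a': "a' \<in> L" "J = {a'..<next_cut L a'}" by (auto simp: cut_partition_def)
    then have "h a = h a'" using J next_cut_gt[OF L a'(1)] by simp
    then show "J = {a..<next_cut L a}" using inj a a' by (simp add: inj_on_eq_iff)
  qed
  moreover have "\<exists>I\<in>cut_partition L. h a = h (lend I)" using I lt by force
  ultimately show ?thesis using lt by (simp add: sigma_hP_def beta_pt_def cut_beta_def)
qed

lemma sigma_hP_cut_partition_other:
  assumes L: "cut_set L" and x: "x \<notin> h ` L"
  shows "sigma_hP h (cut_partition L) x = x"
  using x next_cut_gt[OF L] by (auto simp: sigma_hP_def cut_partition_def)

lemma eps_hP_eq_by_transposition:
  assumes R: "R_hP h P = Suc (R_hP h Q)" and perm: "permutation (sigma_hP h Q)"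
    and \<sigma>: "sigma_hP h P = sigma_hP h Q \<circ> Transposition.transpose x y" and xy: "x \<noteq> y"
  shows "eps_hP h P = eps_hP h Q"
proof -
  have "\<not> evenperm (Transposition.transpose x y)" using xy by (simp add: evenperm_swap)
  then have "evenperm (sigma_hP h P) \<longleftrightarrow> \<not> evenperm (sigma_hP h Q)"
    using evenperm_comp[OF perm permutation_swap_id] by (simp add: \<sigma>)
  then show ?thesis using R by (auto simp: eps_hP_def sgn2_def)
qed

section \<open>The infima \<beta> permute the values of h at the cuts\<close>

context
  fixes h :: "real \<Rightarrow> real"
  assumes bij: "bij_betw h Xs Xs"
begin

lemma image_cut_interval_subset_Xs:
  "cut_set L \<Longrightarrow> a \<in> L \<Longrightarrow> h ` {a<..<next_cut L a} \<subseteq> Xs"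
  using cut_interval_subset_Xs bij_betw_imp_surj_on[OF bij] by fastforce

lemma image_cut_intervals_disjoint:
  assumes L: "cut_set L" and a: "a \<in> L" "a' \<in> L" "a \<noteq> a'"
  shows "h ` {a<..<next_cut L a} \<inter> h ` {a'<..<next_cut L a'} = {}"
proof -
  have "{a<..<next_cut L a} \<union> {a'<..<next_cut L a'} \<subseteq> Xs"
    using cut_interval_subset_Xs[OF L] a by fastforce
  moreover have "{a<..<next_cut L a} \<inter> {a'<..<next_cut L a'} = {}"
    using cut_intervals_disjoint[OF L a] by auto
  ultimately show ?thesis
    using bij_betw_imp_inj_on[OF bij] by (simp add: inj_on_image_Int[symmetric])
qed

lemma inj_on_cut_set: "cut_set L \<Longrightarrow> inj_on h L"
  using bij_betw_imp_inj_on[OF bij] by (auto simp: cut_set_def intro: inj_on_subset)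

context
  fixes L :: "real set"
  assumes adm: "admissible_cuts h L"
begin

lemma image_cut_interval_props:
  assumes a: "a \<in> L"
  shows "open (h ` {a<..<next_cut L a})" "is_interval (h ` {a<..<next_cut L a})"
    "bdd_below (h ` {a<..<next_cut L a})" "h ` {a<..<next_cut L a} \<noteq> {}"
proof -
  have L: "cut_set L" and cont: "continuous_on {a<..<next_cut L a} h"
    using adm a by (auto simp: admissible_cuts_def)
  have inj: "inj_on h {a<..<next_cut L a}"
    by (rule inj_on_subset[OF bij_betw_imp_inj_on[OF bij]]) (use cut_interval_subset_Xs[OF L a] in auto)
  show "open (h ` {a<..<next_cut L a})"
    by (rule injective_into_1d_imp_open_map_UNIV[OF _ cont inj]) auto
  show "is_interval (h ` {a<..<next_cut L a})"
    unfolding is_interval_connected_1 by (rule connected_continuous_image[OF cont]) simp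
  show "bdd_below (h ` {a<..<next_cut L a})"
    using image_cut_interval_subset_Xs[OF L a] by (intro bdd_belowI[of _ 0]) (auto simp: Xs_def)
  show "h ` {a<..<next_cut L a} \<noteq> {}" using next_cut_gt[OF L a] by simp
qed

lemma cut_beta_not_in_image: "a \<in> L \<Longrightarrow> cut_beta h L a \<notin> h ` {a<..<next_cut L a}"
  unfolding cut_beta_def using image_cut_interval_props by (intro Inf_notin_open_real)

lemma eventually_at_right_cut_beta:
  assumes a: "a \<in> L"
  shows "eventually (\<lambda>t. t \<in> h ` {a<..<next_cut L a}) (at_right (cut_beta h L a))"
proof -
  obtain u where u: "u \<in> h ` {a<..<next_cut L a}" using image_cut_interval_props(4)[OF a] by blast
  show ?thesis
    unfolding cut_beta_def by (rule eventually_at_right_Inf[OF image_cut_interval_props(1-3)[OF a] u])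
qed

lemma cut_beta_in_Xs:
  assumes a: "a \<in> L"
  shows "cut_beta h L a \<in> Xs"
proof -
  have L: "cut_set L" using adm by (rule admissible_cuts_imp_cut_set)
  note U = image_cut_interval_subset_Xs[OF L a] image_cut_interval_props[OF a]
  obtain u where u: "u \<in> h ` {a<..<next_cut L a}" using U(5) by blast
  have "0 \<le> cut_beta h L a"
    unfolding cut_beta_def using U(1,5) by (intro cInf_greatest) (auto simp: Xs_def)
  moreover have "cut_beta h L a \<le> u" unfolding cut_beta_def using u U(4) by (rule cInf_lower)
  ultimately show ?thesis using u U(1) by (auto simp: Xs_def)
qed

lemma eq_if_eventually_in_image_cut_interval:
  assumes a: "a \<in> L" "a' \<in> L"
    and near: "eventually (\<lambda>t. t \<in> h ` {a'<..<next_cut L a'}) (at_right (cut_beta h L a))"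
  shows "a' = a"
proof (rule ccontr)
  assume "a' \<noteq> a"
  have "eventually (\<lambda>t. t \<in> h ` {a<..<next_cut L a} \<inter> h ` {a'<..<next_cut L a'})
      (at_right (cut_beta h L a))"
    using eventually_at_right_cut_beta[OF a(1)] near by (auto elim: eventually_elim2)
  then obtain t where "t \<in> h ` {a<..<next_cut L a} \<inter> h ` {a'<..<next_cut L a'}"
    using eventually_happens'[OF trivial_limit_at_right_real] by blast
  with image_cut_intervals_disjoint[OF admissible_cuts_imp_cut_set[OF adm] a] \<open>a' \<noteq> a\<close>
  show False by blast
qed

lemma cut_beta_in_image_cuts:
  assumes a: "a \<in> L"
  shows "cut_beta h L a \<in> h ` L"
proof -
  have L: "cut_set L" using adm by (rule admissible_cuts_imp_cut_set)
  obtain z where z: "z \<in> Xs" "h z = cut_beta h L a"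
    using cut_beta_in_Xs[OF a] bij_betw_imp_surj_on[OF bij] by (metis imageE)
  obtain a' where a': "a' \<in> L" "a' \<le> z" "z < next_cut L a'" by (rule cut_set_cover[OF L z(1)])
  show ?thesis
  proof (cases "z = a'")
    case True
    then show ?thesis using z a'(1) by (metis imageI)
  next
    case False
    then have beta: "cut_beta h L a \<in> h ` {a'<..<next_cut L a'}" using z a' by force
    have "eventually (\<lambda>t. t \<in> h ` {a'<..<next_cut L a'}) (at_right (cut_beta h L a))"
      using eventually_nhds_in_open[OF image_cut_interval_props(1)[OF a'(1)] beta]
      by (rule filter_leD[OF at_within_le_nhds])
    then have "a' = a" by (rule eq_if_eventually_in_image_cut_interval[OF a a'(1)])
    then show ?thesis using beta cut_beta_not_in_image[OF a] by simp
  qed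
qed

lemma inj_on_cut_beta: "inj_on (cut_beta h L) L"
proof (rule inj_onI)
  fix a a' assume a: "a \<in> L" "a' \<in> L" "cut_beta h L a = cut_beta h L a'"
  have "a' = a"
    using eventually_at_right_cut_beta[OF a(2)] a(3)
    by (intro eq_if_eventually_in_image_cut_interval[OF a(1,2)]) simp
  then show "a = a'" ..
qed

lemma cut_beta_image: "cut_beta h L ` L = h ` L"
proof -
  have "finite L" using adm by (simp add: admissible_cuts_def cut_set_def)
  moreover have "card (cut_beta h L ` L) = card (h ` L)"
  proof -
    have "inj_on h L" by (rule inj_on_cut_set[OF admissible_cuts_imp_cut_set[OF adm]])
    then show ?thesis using inj_on_cut_beta by (simp add: card_image)
  qed
  ultimately show ?thesis using cut_beta_in_image_cuts by (intro card_subset_eq) auto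
qed

lemma permutation_sigma_cut_partition: "permutation (sigma_hP h (cut_partition L))"
proof -
  let ?\<sigma> = "sigma_hP h (cut_partition L)"
  have L: "cut_set L" using adm by (rule admissible_cuts_imp_cut_set)
  have inj: "inj_on h L" by (rule inj_on_cut_set[OF L])
  have \<sigma>: "?\<sigma> ` h ` L = cut_beta h L ` L"
    by (auto simp: image_image sigma_hP_cut_partition_cut[OF L inj])
  have "inj_on ?\<sigma> (h ` L)"
    using inj_on_cut_beta inj by (auto simp: inj_on_def sigma_hP_cut_partition_cut[OF L inj])
  then have "?\<sigma> permutes h ` L"
    using \<sigma> cut_beta_image sigma_hP_cut_partition_other[OF L]
    by (intro bij_imp_permutes) (auto simp: bij_betw_def)
  then show ?thesis using L by (intro permutes_imp_permutation) (auto simp: cut_set_def)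
qed

end

end

section \<open>Removing a cut at a point of continuity\<close>

locale cut_removal =
  fixes h :: "real \<Rightarrow> real" and L :: "real set" and a c :: real
  assumes bij: "bij_betw h Xs Xs" and adm: "admissible_cuts h L"
    and a: "a \<in> L" and c: "c \<in> L" "next_cut L a = c" and cont_c: "isCont h c"
begin

lemma cut_set_L: "cut_set L"
  by (rule admissible_cuts_imp_cut_set[OF adm])

lemma cut_order: "a < c" "c < next_cut L c"
  using next_cut_gt[OF cut_set_L] a c by auto

lemma inj_on_L: "inj_on h L"
  by (rule inj_on_cut_set[OF bij cut_set_L])

lemma next_cut_pred: "next_cut (L - {c}) a = next_cut L c"
  by (rule next_cut_Diff_predecessor[OF cut_set_L a c])

lemma next_cut_other:
  assumes "x \<in> L - {c}" "x \<noteq> a"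
  shows "next_cut (L - {c}) x = next_cut L x"
proof (rule next_cut_Diff[OF cut_set_L])
  show "next_cut L x \<noteq> c"
    using assms a c inj_on_next_cut[OF cut_set_L] by (metis DiffD1 inj_on_eq_iff)
qed (use assms in simp)

lemma continuous_on_merged: "continuous_on {a<..<next_cut L c} h"
proof (rule continuous_on_greaterThanLessThan_join[OF _ _ cont_c])
  have "\<forall>x\<in>L. continuous_on {x<..<next_cut L x} h" using adm by (simp add: admissible_cuts_def)
  then show "continuous_on {a<..<c} h" "continuous_on {c<..<next_cut L c} h"
    using a c by auto
qed

lemma cut_set_removed: "cut_set (L - {c})"
  using cut_set_L cut_order cut_set_bounds[OF cut_set_L a] by (auto simp: cut_set_def)

lemma admissible_removed: "admissible_cuts h (L - {c})"
proof -
  have "continuous_on {x<..<next_cut (L - {c}) x} h" if x: "x \<in> L - {c}" for x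
  proof (cases "x = a")
    case True
    then show ?thesis using continuous_on_merged next_cut_pred by simp
  next
    case False
    then show ?thesis using adm x next_cut_other[OF x] by (simp add: admissible_cuts_def)
  qed
  then show ?thesis using cut_set_removed unfolding admissible_cuts_def by blast
qed

lemma merged_monotone:
  "strict_mono_on {a<..<next_cut L c} h \<or> strict_antimono_on {a<..<next_cut L c} h"
proof -
  have "{a<..<next_cut L c} \<subseteq> Xs"
    using cut_set_bounds[OF cut_set_L a] next_cut_le_1[of L c] cut_set_L
    by (auto simp: Xs_def cut_set_def)
  then have "inj_on h {a<..<next_cut L c}"
    using bij_betw_imp_inj_on[OF bij] by (rule inj_on_subset[rotated])
  then show ?thesis
    using injective_eq_monotone_map continuous_on_merged by (simp add: is_interval_connected_1)
qed

lemma bdd_below_merged: "bdd_below (h ` {a<..<next_cut L c})"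
proof -
  have "a \<in> L - {c}" using a cut_order by simp
  then show ?thesis using image_cut_interval_props(3)[OF bij admissible_removed] next_cut_pred by metis
qed

lemma sigma_other:
  assumes "x \<noteq> h a" "x \<noteq> h c"
  shows "sigma_hP h (cut_partition L) x = sigma_hP h (cut_partition (L - {c})) x"
proof (cases "x \<in> h ` (L - {c})")
  case True
  then obtain y where y: "y \<in> L - {c}" "x = h y" by blast
  then have "y \<noteq> a" using assms by auto
  have "sigma_hP h (cut_partition (L - {c})) x = cut_beta h (L - {c}) y"
    using sigma_hP_cut_partition_cut[OF cut_set_removed _ y(1)] inj_on_L y(2)
    by (simp add: inj_on_diff)
  also have "\<dots> = cut_beta h L y"
    unfolding cut_beta_def using next_cut_other[OF y(1) \<open>y \<noteq> a\<close>] by simp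
  also have "\<dots> = sigma_hP h (cut_partition L) x"
    using sigma_hP_cut_partition_cut[OF cut_set_L inj_on_L] y by simp
  finally show ?thesis by (rule sym)
next
  case False
  then have "x \<notin> h ` L" using assms(2) by auto
  then show ?thesis
    using False sigma_hP_cut_partition_other[OF cut_set_L] sigma_hP_cut_partition_other[OF cut_set_removed]
    by simp
qed

lemma sigma_values:
  "sigma_hP h (cut_partition L) (h a) = Inf (h ` {a<..<c})"
  "sigma_hP h (cut_partition L) (h c) = Inf (h ` {c<..<next_cut L c})"
  "sigma_hP h (cut_partition (L - {c})) (h a) = Inf (h ` {a<..<next_cut L c})"
  "sigma_hP h (cut_partition (L - {c})) (h c) = h c"
proof -
  have inj': "inj_on h (L - {c})" using inj_on_L by (rule inj_on_diff)
  show "sigma_hP h (cut_partition L) (h a) = Inf (h ` {a<..<c})"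
    "sigma_hP h (cut_partition L) (h c) = Inf (h ` {c<..<next_cut L c})"
    using sigma_hP_cut_partition_cut[OF cut_set_L inj_on_L] a c by (simp_all add: cut_beta_def)
  show "sigma_hP h (cut_partition (L - {c})) (h a) = Inf (h ` {a<..<next_cut L c})"
    using sigma_hP_cut_partition_cut[OF cut_set_removed inj'] a cut_order next_cut_pred
    by (simp add: cut_beta_def)
  have "h c \<notin> h ` (L - {c})" using inj_on_L c by (auto simp: inj_on_eq_iff)
  then show "sigma_hP h (cut_partition (L - {c})) (h c) = h c"
    by (rule sigma_hP_cut_partition_other[OF cut_set_removed])
qed

lemma decreasing_cuts_other:
  "x \<noteq> a \<Longrightarrow> x \<noteq> c \<Longrightarrow> x \<in> decreasing_cuts h (L - {c}) \<longleftrightarrow> x \<in> decreasing_cuts h L"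
  using next_cut_other by (auto simp: decreasing_cuts_def)

lemma decreasing_cuts_if_increasing:
  assumes mono: "strict_mono_on {a<..<next_cut L c} h"
  shows "decreasing_cuts h (L - {c}) = decreasing_cuts h L"
proof -
  have not_dec: "\<not> strict_antimono_on {p<..<q} h" if "a \<le> p" "p < q" "q \<le> next_cut L c" for p q
  proof -
    have "{p<..<q} \<subseteq> {a<..<next_cut L c}" using that by auto
    then show ?thesis using strict_mono_on_not_antimono[OF monotone_on_subset[OF mono]] that(2) by blast
  qed
  have "a \<notin> decreasing_cuts h (L - {c})" "a \<notin> decreasing_cuts h L" "c \<notin> decreasing_cuts h L"
    using not_dec[of a c] not_dec[of c "next_cut L c"] not_dec[of a "next_cut L c"]
      next_cut_pred cut_order c by (auto simp: decreasing_cuts_def)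
  moreover have "c \<notin> decreasing_cuts h (L - {c})" by (simp add: decreasing_cuts_def)
  ultimately show ?thesis using decreasing_cuts_other by (intro set_eqI) metis
qed

lemma decreasing_cuts_if_decreasing:
  assumes anti: "strict_antimono_on {a<..<next_cut L c} h"
  shows "decreasing_cuts h L = insert c (decreasing_cuts h (L - {c}))"
proof -
  have dec: "strict_antimono_on {p<..<q} h" if "a \<le> p" "q \<le> next_cut L c" for p q
    using that by (intro monotone_on_subset[OF anti]) auto
  have "a \<in> decreasing_cuts h (L - {c})" "a \<in> decreasing_cuts h L" "c \<in> decreasing_cuts h L"
    using dec[of a c] dec[of c "next_cut L c"] dec[of a "next_cut L c"]
      next_cut_pred cut_order a c by (auto simp: decreasing_cuts_def)
  then show ?thesis using decreasing_cuts_other by (intro set_eqI) (metis insert_iff)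
qed

lemma sigma_if_increasing:
  assumes mono: "strict_mono_on {a<..<next_cut L c} h"
  shows "sigma_hP h (cut_partition (L - {c})) = sigma_hP h (cut_partition L)"
proof
  fix x
  have "Inf (h ` {a<..<c}) = Inf (h ` {a<..<next_cut L c})"
    using cut_order bdd_below_merged strict_mono_on_imp_mono_on[OF mono]
    by (intro Inf_image_initial_segment) auto
  moreover have "Inf (h ` {c<..<next_cut L c}) = h c"
  proof (rule Inf_image_eq_limit)
    show "(h \<longlongrightarrow> h c) (at_right c)" using cont_c by (simp add: isCont_def filterlim_at_split)
    show "eventually (\<lambda>x. x \<in> {c<..<next_cut L c}) (at_right c)"
      using cut_order by (intro eventually_at_right_real)
    show "h c \<le> h y" if "y \<in> {c<..<next_cut L c}" for y
      using that cut_order monotone_onD[OF mono, of c y] by auto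
  qed simp
  ultimately show "sigma_hP h (cut_partition (L - {c})) x = sigma_hP h (cut_partition L) x"
    using sigma_values sigma_other by (cases "x = h a \<or> x = h c") auto
qed

lemma sigma_if_decreasing:
  assumes anti: "strict_antimono_on {a<..<next_cut L c} h"
  shows "sigma_hP h (cut_partition L)
    = sigma_hP h (cut_partition (L - {c})) \<circ> Transposition.transpose (h a) (h c)"
proof
  fix x
  have "Inf (h ` {a<..<c}) = h c"
  proof (rule Inf_image_eq_limit)
    show "(h \<longlongrightarrow> h c) (at_left c)" using cont_c by (simp add: isCont_def filterlim_at_split)
    show "eventually (\<lambda>x. x \<in> {a<..<c}) (at_left c)"
      using cut_order by (intro eventually_at_left_real)
    show "h c \<le> h y" if "y \<in> {a<..<c}" for y
      using that cut_order monotone_onD[OF anti, of y c] by auto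
  qed simp
  moreover have "Inf (h ` {c<..<next_cut L c}) = Inf (h ` {a<..<next_cut L c})"
    using cut_order bdd_below_merged anti[unfolded strict_antimono_iff_antimono]
    by (intro Inf_image_final_segment) auto
  ultimately show "sigma_hP h (cut_partition L) x
      = (sigma_hP h (cut_partition (L - {c})) \<circ> Transposition.transpose (h a) (h c)) x"
    using sigma_values sigma_other by (cases "x = h a \<or> x = h c") (auto simp: transpose_def)
qed

lemma eps_eq: "eps_hP h (cut_partition (L - {c})) = eps_hP h (cut_partition L)"
  using merged_monotone
proof
  assume mono: "strict_mono_on {a<..<next_cut L c} h"
  then show ?thesis
    using decreasing_cuts_if_increasing[OF mono] sigma_if_increasing[OF mono]
    by (simp add: eps_hP_def R_hP_cut_partition cut_set_L cut_set_removed)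
next
  assume anti: "strict_antimono_on {a<..<next_cut L c} h"
  have "finite (decreasing_cuts h (L - {c}))" "c \<notin> decreasing_cuts h (L - {c})"
    using cut_set_L by (auto simp: decreasing_cuts_def cut_set_def)
  then have "R_hP h (cut_partition L) = Suc (R_hP h (cut_partition (L - {c})))"
    using decreasing_cuts_if_decreasing[OF anti]
    by (simp add: R_hP_cut_partition cut_set_L cut_set_removed)
  moreover have "h a \<noteq> h c" using inj_on_L a c cut_order by (auto simp: inj_on_eq_iff)
  ultimately show ?thesis
    using permutation_sigma_cut_partition[OF bij admissible_removed] sigma_if_decreasing[OF anti]
    by (intro eps_hP_eq_by_transposition[symmetric])
qed

end

lemma eps_hP_remove_cut:
  assumes bij: "bij_betw h Xs Xs" and adm: "admissible_cuts h L"
    and c: "c \<in> L" "c \<noteq> 0" and cont: "isCont h c"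
  shows "admissible_cuts h (L - {c})"
    and "eps_hP h (cut_partition (L - {c})) = eps_hP h (cut_partition L)"
proof -
  have L: "cut_set L" using adm by (rule admissible_cuts_imp_cut_set)
  obtain a where "a \<in> L" "next_cut L a = c" by (rule cut_predecessor[OF L c])
  then interpret cut_removal h L a c using bij adm c cont by unfold_locales
  show "admissible_cuts h (L - {c})" by (rule admissible_removed)
  show "eps_hP h (cut_partition (L - {c})) = eps_hP h (cut_partition L)" by (rule eps_eq)
qed

section \<open>The minimal cut set\<close>

definition discontinuities :: "(real \<Rightarrow> real) \<Rightarrow> real set" where
  "discontinuities h = {x\<in>{0<..<1}. \<not> isCont h x}"

definition minimal_cuts :: "(real \<Rightarrow> real) \<Rightarrow> real set" where
  "minimal_cuts h = insert 0 (discontinuities h)"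

lemma finite_discontinuities:
  assumes "PC_hat h"
  shows "finite (discontinuities h)"
proof -
  obtain F where F: "finite F" "\<And>x. x \<in> Xs - F \<Longrightarrow> continuous (at x within Xs) h"
    using assms unfolding PC_hat_def by blast
  have "x \<in> F" if x: "x \<in> discontinuities h" for x
  proof (rule ccontr)
    assume "x \<notin> F"
    have x01: "x \<in> {0<..<1}" using x by (simp add: discontinuities_def)
    with \<open>x \<notin> F\<close> have "continuous (at x within Xs) h" using F(2) by (auto simp: Xs_def)
    then have "continuous (at x within {0<..<1}) h"
      by (rule continuous_within_subset) (auto simp: Xs_def)
    then show False using x at_within_open[OF x01] by (simp add: discontinuities_def)
  qed
  then show ?thesis using F(1) by (meson finite_subset subsetI)
qed

lemma admissible_minimal_cuts:
  assumes "PC_hat h"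
  shows "admissible_cuts h (minimal_cuts h)"
proof -
  let ?L = "minimal_cuts h"
  have L: "cut_set ?L"
    using finite_discontinuities[OF assms]
    by (auto simp: cut_set_def minimal_cuts_def discontinuities_def Xs_def)
  have "isCont h y" if a: "a \<in> ?L" and y: "y \<in> {a<..<next_cut ?L a}" for a y
  proof -
    have y01: "y \<in> {0<..<1}"
      using y cut_set_bounds[OF L a] next_cut_le_1[of ?L a] L by (auto simp: cut_set_def)
    have "y \<notin> ?L" using y next_cut_le[of ?L y a] L by (auto simp: cut_set_def)
    then show ?thesis using y01 by (auto simp: minimal_cuts_def discontinuities_def)
  qed
  then have "\<forall>a\<in>?L. continuous_on {a<..<next_cut ?L a} h"
    by (blast intro: continuous_at_imp_continuous_on)
  with L show ?thesis by (simp add: admissible_cuts_def)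
qed

lemma minimal_cuts_subset:
  assumes adm: "admissible_cuts h L"
  shows "minimal_cuts h \<subseteq> L"
proof
  have L: "cut_set L" using adm by (rule admissible_cuts_imp_cut_set)
  fix x assume x: "x \<in> minimal_cuts h"
  show "x \<in> L"
  proof (cases "x = 0")
    case True then show ?thesis using L by (simp add: cut_set_def)
  next
    case False
    then have disc: "x \<in> {0<..<1}" "\<not> isCont h x"
      using x by (auto simp: minimal_cuts_def discontinuities_def)
    then have "x \<in> Xs" by (simp add: Xs_def)
    then obtain a where a: "a \<in> L" "a \<le> x" "x < next_cut L a" by (rule cut_set_cover[OF L])
    show ?thesis
    proof (rule ccontr)
      assume "x \<notin> L"
      then have "x \<in> {a<..<next_cut L a}" using a by (cases "a = x") auto
      moreover have "continuous_on {a<..<next_cut L a} h" using adm a(1) by (simp add: admissible_cuts_def)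
      ultimately show False using disc(2) continuous_on_eq_continuous_at[OF open_greaterThanLessThan] by blast
    qed
  qed
qed

lemma eps_hP_cut_partition_minimal:
  assumes pc: "PC_hat h" and adm: "admissible_cuts h L"
  shows "eps_hP h (cut_partition L) = eps_hP h (cut_partition (minimal_cuts h))"
  using adm
proof (induction "card L" arbitrary: L rule: less_induct)
  case less
  show ?case
  proof (cases "L = minimal_cuts h")
    case False
    then obtain c where c: "c \<in> L" "c \<notin> minimal_cuts h"
      using minimal_cuts_subset[OF less.prems] by blast
    have L: "cut_set L" using less.prems by (simp add: admissible_cuts_def)
    have "c \<noteq> 0" "isCont h c"
      using c cut_set_bounds[OF L c(1)] by (auto simp: minimal_cuts_def discontinuities_def)
    moreover have bij: "bij_betw h Xs Xs" using pc by (simp add: PC_hat_def)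
    ultimately have adm': "admissible_cuts h (L - {c})"
      and eps: "eps_hP h (cut_partition (L - {c})) = eps_hP h (cut_partition L)"
      using eps_hP_remove_cut[OF bij less.prems c(1)] by blast+
    have "card (L - {c}) < card L"
      using L c(1) by (intro card_Diff1_less) (auto simp: cut_set_def)
    then show ?thesis using less.hyps[OF _ adm'] eps by simp
  qed simp
qed

lemma Pmin_eq_cut_partition_minimal:
  assumes pc: "PC_hat h"
  shows "Pmin h = cut_partition (minimal_cuts h)"
proof -
  let ?L0 = "minimal_cuts h"
  have adm0: "admissible_cuts h ?L0" by (rule admissible_minimal_cuts[OF pc])
  then have L0: "cut_set ?L0" by (rule admissible_cuts_imp_cut_set)
  have cuts: "?L0 \<subseteq> lend ` Q" "finite (lend ` Q)" "cut_partition (lend ` Q) = Q"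
    "card Q = card (lend ` Q)" if Q: "assoc_partition h Q" for Q
  proof -
    note adm = assoc_partition_eq_cut_partition(1)[OF Q]
      and eq = assoc_partition_eq_cut_partition(2)[OF Q]
    have L: "cut_set (lend ` Q)" by (rule admissible_cuts_imp_cut_set[OF adm])
    show "?L0 \<subseteq> lend ` Q" by (rule minimal_cuts_subset[OF adm])
    show "finite (lend ` Q)" using L by (simp add: cut_set_def)
    show "cut_partition (lend ` Q) = Q" by (fact eq)
    show "card Q = card (lend ` Q)" using card_cut_partition[OF L] eq by simp
  qed
  have min: "card (cut_partition ?L0) \<le> card Q" if "assoc_partition h Q" for Q
    using cuts[OF that] card_cut_partition[OF L0] by (simp add: card_mono)
  show ?thesis unfolding Pmin_def
  proof (rule the_equality)
    show "assoc_partition h (cut_partition ?L0) \<and>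
        (\<forall>Q. assoc_partition h Q \<longrightarrow> card (cut_partition ?L0) \<le> card Q)"
      using assoc_partition_cut_partition[OF adm0] min by blast
    fix P assume P: "assoc_partition h P \<and> (\<forall>Q. assoc_partition h Q \<longrightarrow> card P \<le> card Q)"
    then have "card (lend ` P) \<le> card ?L0"
      using assoc_partition_cut_partition[OF adm0] card_cut_partition[OF L0] cuts(4)[of P] by metis
    moreover have "card ?L0 \<le> card (lend ` P)" using P cuts(1,2)[of P] by (simp add: card_mono)
    ultimately have "?L0 = lend ` P" using cuts(1,2)[of P] P by (intro card_subset_eq) auto
    then show "P = cut_partition ?L0" using cuts(3)[of P] P by simp
  qed
qed

theorem lemma3p6:
  fixes h :: "real \<Rightarrow> real" and P :: "real set set"
  assumes "PC_hat h" and "assoc_partition h P"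
  shows "eps_h h = eps_hP h P"
proof -
  have "eps_hP h P = eps_hP h (cut_partition (lend ` P))"
    by (simp add: assoc_partition_eq_cut_partition(2)[OF assms(2)])
  also have "\<dots> = eps_hP h (cut_partition (minimal_cuts h))"
    by (rule eps_hP_cut_partition_minimal[OF assms(1) assoc_partition_eq_cut_partition(1)[OF assms(2)]])
  finally have "eps_hP h P = eps_hP h (cut_partition (minimal_cuts h))" .
  then show ?thesis by (simp add: eps_h_def Pmin_eq_cut_partition_minimal[OF assms(1)])
qed

end
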